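(* Let $\alpha>1$ and $n\ge1$. For $k\in[n]$ let $X_{k,n}$ be the $k$-th order statistic of $n$ i.i.d. random variables from the Pareto distribution $\mathcal{P}_\alpha$, and $Y_{k,n}$ the $k$-th order statistic of $n$ i.i.d. random variables from the Fréchet distribution $\mathcal{F}_\alpha$. Then $\mathbb{E}[Y_{k,n}]\le\mathbb{E}[X_{k,n}]+1$.
   Context: Pareto $\mathcal{P}_\alpha$: CDF $1-x^{-\alpha}$ for $x\ge1$; Fréchet $\mathcal{F}_\alpha$: CDF $e^{-1/x^\alpha}$ for $x\ge0$. The $k$-th order statistic is the $k$-th smallest value (same convention for both samples). *)

theory Defs
  imports "HOL-Probability.Probability"
begin

definition order_stat :: "nat \<Rightarrow> nat \<Rightarrow> (nat \<Rightarrow> real) \<Rightarrow> real" where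
  "order_stat n k \<omega> = sort (map \<omega> [0..<n]) ! (k - 1)"

definition pareto_cdf :: "real \<Rightarrow> real \<Rightarrow> real" where
  "pareto_cdf \<alpha> x = (if x \<ge> 1 then 1 - x powr (-\<alpha>) else 0)"

definition frechet_cdf :: "real \<Rightarrow> real \<Rightarrow> real" where
  "frechet_cdf \<alpha> x = (if x > 0 then exp (- 1 / x powr \<alpha>) else 0)"

end

theory Submission
  imports Defs
begin

text \<open>Since \<open>exp (-t) \<ge> 1 - t\<close>, the Frechet CDF dominates the Pareto CDF, so the Frechet
  distribution is stochastically smaller. Concretely, the quantile transform
  \<open>g = F\<^sup>-\<^sup>1 \<circ> cdf P\<close> pushes the Pareto law forward to the Frechet law and satisfies
  \<open>g x \<le> x\<close>. Applying \<open>g\<close> coordinatewise to an i.i.d.\ Pareto sample yields an i.i.d.\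
  Frechet sample that is pointwise smaller, and order statistics are monotone in the
  sample; hence \<open>E Y\<^sub>k\<^sub>,\<^sub>n \<le> E X\<^sub>k\<^sub>,\<^sub>n\<close>, without even needing the summand \<open>1\<close>.\<close>

lemma sorted_nth_le_iff:
  fixes ys :: "'a::linorder list"
  assumes "sorted ys" "j < length ys"
  shows "ys ! j \<le> y \<longleftrightarrow> j < card {i. i < length ys \<and> ys ! i \<le> y}"
proof
  assume "ys ! j \<le> y"
  then have "{0..j} \<subseteq> {i. i < length ys \<and> ys ! i \<le> y}"
    using assms by (auto intro: order_trans[OF sorted_nth_mono])
  from card_mono[OF _ this] show "j < card {i. i < length ys \<and> ys ! i \<le> y}" by simp
next
  assume card_gt: "j < card {i. i < length ys \<and> ys ! i \<le> y}"
  show "ys ! j \<le> y"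
  proof (rule ccontr)
    assume "\<not> ys ! j \<le> y"
    then have "i < j" if "i < length ys" "ys ! i \<le> y" for i
      using sorted_nth_mono[OF assms(1), of j i] that by (meson not_le order_trans)
    then have "{i. i < length ys \<and> ys ! i \<le> y} \<subseteq> {0..<j}" by auto
    from card_mono[OF _ this] card_gt show False by simp
  qed
qed

lemma order_stat_le_iff:
  assumes "1 \<le> k" "k \<le> n"
  shows "order_stat n k \<omega> \<le> y \<longleftrightarrow> k \<le> card {i\<in>{..<n}. \<omega> i \<le> y}"
proof -
  define ys where "ys = sort (map \<omega> [0..<n])"
  have "card {i. i < length ys \<and> ys ! i \<le> y} = length (filter (\<lambda>z. z \<le> y) ys)"
    by (simp add: length_filter_conv_card)
  also have "\<dots> = length (filter (\<lambda>z. z \<le> y) (map \<omega> [0..<n]))"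
    unfolding ys_def by (metis mset_filter mset_sort size_mset)
  also have "\<dots> = card {i\<in>{..<n}. \<omega> i \<le> y}"
    by (simp add: length_filter_conv_card) (rule arg_cong[where f=card], auto)
  finally have "card {i. i < length ys \<and> ys ! i \<le> y} = card {i\<in>{..<n}. \<omega> i \<le> y}" .
  moreover have "ys ! (k - 1) \<le> y \<longleftrightarrow> k - 1 < card {i. i < length ys \<and> ys ! i \<le> y}"
    using assms by (intro sorted_nth_le_iff) (auto simp: ys_def)
  ultimately show ?thesis
    using assms by (auto simp: order_stat_def ys_def)
qed

lemma order_stat_mono:
  assumes "1 \<le> k" "k \<le> n" "\<And>i. i < n \<Longrightarrow> \<omega>' i \<le> \<omega> i"
  shows "order_stat n k \<omega>' \<le> order_stat n k \<omega>"
proof -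
  let ?y = "order_stat n k \<omega>"
  have "k \<le> card {i\<in>{..<n}. \<omega> i \<le> ?y}"
    using order_stat_le_iff[OF assms(1,2), of \<omega> ?y] by simp
  also have "\<dots> \<le> card {i\<in>{..<n}. \<omega>' i \<le> ?y}"
    by (rule card_mono) (auto intro: order_trans[OF assms(3)])
  finally show ?thesis
    using order_stat_le_iff[OF assms(1,2), of \<omega>' ?y] by simp
qed

lemma order_stat_measurable:
  assumes "1 \<le> k" "k \<le> n"
  shows "order_stat n k \<in> borel_measurable (PiM {..<n} (\<lambda>_. borel))"
  unfolding borel_measurable_iff_le
proof
  fix a :: real
  have "real (card {i\<in>{..<n}. \<omega> i \<le> a}) = (\<Sum>i<n. if \<omega> i \<le> a then 1 else 0)" for \<omega>
    by (simp add: sum.If_cases Int_def conj_commute)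
  then have "order_stat n k \<omega> \<le> a \<longleftrightarrow> real k \<le> (\<Sum>i<n. if \<omega> i \<le> a then 1 else 0)" for \<omega>
    by (metis order_stat_le_iff[OF assms] of_nat_le_iff)
  then have "{\<omega> \<in> space (PiM {..<n} (\<lambda>_. borel)). order_stat n k \<omega> \<le> a}
      = {\<omega> \<in> space (PiM {..<n} (\<lambda>_. borel)). real k \<le> (\<Sum>i<n. if \<omega> i \<le> a then 1 else 0)}"
    by blast
  also have "\<dots> \<in> sets (PiM {..<n} (\<lambda>_. borel))"
    by measurable
  finally show "{\<omega> \<in> space (PiM {..<n} (\<lambda>_. borel)). order_stat n k \<omega> \<le> a}
      \<in> sets (PiM {..<n} (\<lambda>_. borel))" .
qed

lemma compose_measurable_PiM:
  assumes "g \<in> measurable M N"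
  shows "compose I g \<in> measurable (PiM I (\<lambda>_. M)) (PiM I (\<lambda>_. N))"
  unfolding compose_def
proof (rule measurable_restrict)
  fix i assume "i \<in> I"
  have "(\<lambda>\<omega>. \<omega> i) \<in> measurable (PiM I (\<lambda>_. M)) M"
    using measurable_component_singleton[OF \<open>i \<in> I\<close>, of "\<lambda>_. M"] by simp
  then show "(\<lambda>\<omega>. g (\<omega> i)) \<in> measurable (PiM I (\<lambda>_. M)) N"
    using assms by (rule measurable_compose)
qed

lemma nn_integral_PiM_le_of_coupling:
  fixes M N :: "real measure" and f :: "('i \<Rightarrow> real) \<Rightarrow> ennreal"
  assumes "finite I" "real_distribution M" "real_distribution N"
    and g_meas: "g \<in> borel_measurable borel" and distr_g: "distr M borel g = N"
    and g_le: "\<And>x. g x \<le> x"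
    and f_meas: "f \<in> borel_measurable (PiM I (\<lambda>_. borel))"
    and f_mono: "\<And>\<omega> \<omega>'. (\<And>i. i \<in> I \<Longrightarrow> \<omega>' i \<le> \<omega> i) \<Longrightarrow> f \<omega>' \<le> f \<omega>"
  shows "(\<integral>\<^sup>+ \<omega>. f \<omega> \<partial>PiM I (\<lambda>_. N)) \<le> (\<integral>\<^sup>+ \<omega>. f \<omega> \<partial>PiM I (\<lambda>_. M))"
proof -
  interpret M: real_distribution M by fact
  interpret N: real_distribution N by fact
  have g_MN: "g \<in> measurable M N"
    using g_meas by (simp add: measurable_def)
  have "distr M N g = N"
    using distr_g distr_cong[of M M N borel g g] by simp
  then have prod_N: "PiM I (\<lambda>_. N) = distr (PiM I (\<lambda>_. M)) (PiM I (\<lambda>_. N)) (compose I g)"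
    using distr_PiM_finite_prob_space'[of I "\<lambda>_. M" "\<lambda>_. N" g] \<open>finite I\<close> g_MN
    by (simp add: M.prob_space_axioms N.prob_space_axioms)
  have "sets (PiM I (\<lambda>_. N)) = sets (PiM I (\<lambda>_. borel))"
    by (rule sets_PiM_cong) auto
  then have "f \<in> borel_measurable (PiM I (\<lambda>_. N))"
    using f_meas measurable_cong_sets by blast
  then have "(\<integral>\<^sup>+ \<omega>. f \<omega> \<partial>PiM I (\<lambda>_. N)) = (\<integral>\<^sup>+ \<omega>. f (compose I g \<omega>) \<partial>PiM I (\<lambda>_. M))"
    by (subst prod_N) (rule nn_integral_distr[OF compose_measurable_PiM[OF g_MN]],
        simp add: prod_N[symmetric])
  also have "\<dots> \<le> (\<integral>\<^sup>+ \<omega>. f \<omega> \<partial>PiM I (\<lambda>_. M))"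
    by (intro nn_integral_mono f_mono) (simp add: compose_eq g_le)
  finally show ?thesis .
qed

lemma powr_neg_inv_le_iff:
  fixes a b \<beta> :: real
  assumes "a > 0" "b > 0" "\<beta> > 0"
  shows "a powr (-(1/\<beta>)) \<le> b \<longleftrightarrow> b powr (-\<beta>) \<le> a"
proof
  assume "a powr (-(1/\<beta>)) \<le> b"
  then have "b powr (-\<beta>) \<le> (a powr (-(1/\<beta>))) powr (-\<beta>)"
    using assms by (intro powr_mono2') auto
  also have "\<dots> = a" using assms by (simp add: powr_powr)
  finally show "b powr (-\<beta>) \<le> a" .
next
  assume "b powr (-\<beta>) \<le> a"
  then have "a powr (-(1/\<beta>)) \<le> (b powr (-\<beta>)) powr (-(1/\<beta>))"
    using assms by (intro powr_mono2') auto
  also have "\<dots> = b" using assms by (simp add: powr_powr)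
  finally show "a powr (-(1/\<beta>)) \<le> b" .
qed

lemma powr_neg_inv_ge_iff:
  fixes a b \<beta> :: real
  assumes "a > 0" "b > 0" "\<beta> > 0"
  shows "b \<le> a powr (-(1/\<beta>)) \<longleftrightarrow> a \<le> b powr (-\<beta>)"
proof
  assume "b \<le> a powr (-(1/\<beta>))"
  then have "(a powr (-(1/\<beta>))) powr (-\<beta>) \<le> b powr (-\<beta>)"
    using assms by (intro powr_mono2') auto
  also have "(a powr (-(1/\<beta>))) powr (-\<beta>) = a" using assms by (simp add: powr_powr)
  finally show "a \<le> b powr (-\<beta>)" .
next
  assume "a \<le> b powr (-\<beta>)"
  then have "(b powr (-\<beta>)) powr (-(1/\<beta>)) \<le> a powr (-(1/\<beta>))"
    using assms by (intro powr_mono2') auto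
  also have "(b powr (-\<beta>)) powr (-(1/\<beta>)) = b" using assms by (simp add: powr_powr)
  finally show "b \<le> a powr (-(1/\<beta>))" .
qed

text \<open>The Frechet quantile function \<open>u \<mapsto> (- ln u) powr (-1/\<alpha>)\<close> composed with the Pareto
  CDF. Its values on the Pareto null set \<open>x \<le> 1\<close> are chosen to keep it monotone, below the
  identity and nonpositive there.\<close>
definition pareto_to_frechet :: "real \<Rightarrow> real \<Rightarrow> real" where
  "pareto_to_frechet \<alpha> x =
     (if x > 1 then (- ln (1 - x powr (-\<alpha>))) powr (-1/\<alpha>) else min x 0)"

lemma pareto_tail_bounds:
  fixes \<alpha> x :: real
  assumes "\<alpha> > 0" "x > 1"
  shows "0 < x powr (-\<alpha>)" "x powr (-\<alpha>) < 1" "- ln (1 - x powr (-\<alpha>)) > 0"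
  using assms by (auto simp: powr_less_one)

lemma pareto_to_frechet_pos: "\<alpha> > 0 \<Longrightarrow> x > 1 \<Longrightarrow> pareto_to_frechet \<alpha> x > 0"
  using pareto_tail_bounds[of \<alpha> x] by (simp add: pareto_to_frechet_def)

lemma pareto_to_frechet_le_iff:
  assumes "\<alpha> > 0" "y > 0"
  shows "pareto_to_frechet \<alpha> x \<le> y \<longleftrightarrow> x \<le> (1 - exp (- (y powr (-\<alpha>)))) powr (-1/\<alpha>)"
proof -
  define s where "s = y powr (-\<alpha>)"
  have s: "0 < 1 - exp (- s)" "1 - exp (- s) < 1"
    using assms by (auto simp: s_def)
  show ?thesis
  proof (cases "x > 1")
    case True
    define t where "t = x powr (-\<alpha>)"
    have t: "0 < t" "t < 1" "- ln (1 - t) > 0"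
      using pareto_tail_bounds[OF assms(1) True] by (auto simp: t_def)
    have "pareto_to_frechet \<alpha> x \<le> y \<longleftrightarrow> s \<le> - ln (1 - t)"
      using True assms t by (simp add: pareto_to_frechet_def powr_neg_inv_le_iff s_def t_def)
    also have "\<dots> \<longleftrightarrow> ln (1 - t) \<le> ln (exp (- s))"
      by (simp only: ln_exp) linarith
    also have "\<dots> \<longleftrightarrow> 1 - exp (- s) \<le> t"
      using t by (subst ln_le_cancel_iff) auto
    also have "\<dots> \<longleftrightarrow> x \<le> (1 - exp (- s)) powr (-1/\<alpha>)"
      unfolding t_def using powr_neg_inv_ge_iff[of "1 - exp (- s)" x \<alpha>] s assms True by simp
    finally show ?thesis by (simp add: s_def)
  next
    case False
    have "1 \<le> (1 - exp (- s)) powr (-1/\<alpha>)"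
      using powr_neg_inv_ge_iff[of "1 - exp (- s)" 1 \<alpha>] s assms by simp
    then show ?thesis
      using False assms by (simp add: pareto_to_frechet_def s_def)
  qed
qed

lemma pareto_to_frechet_le: "\<alpha> > 0 \<Longrightarrow> pareto_to_frechet \<alpha> x \<le> x"
proof (cases "x > 1")
  case True
  assume "\<alpha> > 0"
  note t = pareto_tail_bounds[OF this True]
  have "ln (1 - x powr (-\<alpha>)) \<le> - (x powr (-\<alpha>))"
    using ln_le_minus_one[of "1 - x powr (-\<alpha>)"] t by simp
  then show ?thesis
    using True \<open>\<alpha> > 0\<close> t by (simp add: pareto_to_frechet_def powr_neg_inv_le_iff)
qed (simp add: pareto_to_frechet_def)

lemma mono_pareto_to_frechet:
  assumes "\<alpha> > 0"
  shows "mono (pareto_to_frechet \<alpha>)"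
proof
  fix x x' :: real assume "x \<le> x'"
  show "pareto_to_frechet \<alpha> x \<le> pareto_to_frechet \<alpha> x'"
  proof (cases "x' > 1")
    case True
    have "pareto_to_frechet \<alpha> x' > 0"
      using pareto_to_frechet_pos[OF assms True] .
    then show ?thesis
      using pareto_to_frechet_le_iff[OF assms, of _ x] pareto_to_frechet_le_iff[OF assms, of _ x']
        \<open>x \<le> x'\<close> by (meson order.refl order_trans)
  next
    case False
    then show ?thesis using \<open>x \<le> x'\<close> by (simp add: pareto_to_frechet_def)
  qed
qed

lemma measure_pareto_to_frechet_le:
  assumes "\<alpha> > 0" "real_distribution P" "\<And>x. cdf P x = pareto_cdf \<alpha> x"
  shows "measure P {x. pareto_to_frechet \<alpha> x \<le> y} = frechet_cdf \<alpha> y"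
proof (cases "y > 0")
  case True
  define r where "r = 1 - exp (- (y powr (-\<alpha>)))"
  define c where "c = r powr (-1/\<alpha>)"
  have r: "0 < r" "r < 1"
    using True by (auto simp: r_def)
  have "1 \<le> c"
    using powr_neg_inv_ge_iff[of r 1 \<alpha>] r assms(1) by (simp add: c_def)
  have "{x. pareto_to_frechet \<alpha> x \<le> y} = {..c}"
    using pareto_to_frechet_le_iff[OF assms(1) True] by (auto simp: c_def r_def)
  then have "measure P {x. pareto_to_frechet \<alpha> x \<le> y} = cdf P c"
    by (simp add: cdf_def)
  also have "\<dots> = 1 - c powr (-\<alpha>)"
    using \<open>1 \<le> c\<close> by (simp add: assms(3) pareto_cdf_def)
  also have "c powr (-\<alpha>) = r"
    using r assms(1) by (simp add: c_def powr_powr)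
  finally show ?thesis
    using True by (simp add: r_def frechet_cdf_def powr_minus divide_inverse)
next
  case False
  interpret P: real_distribution P by fact
  have "{x. pareto_to_frechet \<alpha> x \<le> y} \<subseteq> {..1}"
    using False pareto_to_frechet_pos[OF assms(1)] by (force simp: not_less)
  then have "measure P {x. pareto_to_frechet \<alpha> x \<le> y} \<le> measure P {..1}"
    by (intro P.finite_measure_mono) auto
  also have "measure P {..1} = 0"
    using assms(3)[of 1] by (simp add: cdf_def pareto_cdf_def)
  finally show ?thesis
    using False by (simp add: frechet_cdf_def measure_nonneg antisym)
qed

lemma distr_pareto_to_frechet:
  assumes "\<alpha> > 0"
    and P: "real_distribution P" "\<And>x. cdf P x = pareto_cdf \<alpha> x"
    and F: "real_distribution F" "\<And>x. cdf F x = frechet_cdf \<alpha> x"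
  shows "distr P borel (pareto_to_frechet \<alpha>) = F"
proof (rule cdf_unique)
  interpret P: real_distribution P by fact
  have meas: "pareto_to_frechet \<alpha> \<in> borel_measurable P"
    using borel_measurable_mono[OF mono_pareto_to_frechet[OF assms(1)]] by simp
  then show "real_distribution (distr P borel (pareto_to_frechet \<alpha>))"
    by (simp add: real_distribution_def real_distribution_axioms_def P.prob_space_distr)
  show "cdf (distr P borel (pareto_to_frechet \<alpha>)) = cdf F"
  proof
    fix y
    show "cdf (distr P borel (pareto_to_frechet \<alpha>)) y = cdf F y"
      using meas measure_pareto_to_frechet_le[OF assms(1) P] F(2)
      by (simp add: cdf_def measure_distr vimage_def)
  qed
qed (fact F)

theorem lemma18:
  fixes \<alpha> :: real and n k :: nat and P F :: "real measure"
  assumes "\<alpha> > 1" and "n \<ge> 1" and "k \<in> {1..n}"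
    and "real_distribution P" and "\<And>x. cdf P x = pareto_cdf \<alpha> x"
    and "real_distribution F" and "\<And>x. cdf F x = frechet_cdf \<alpha> x"
  shows "(\<integral>\<^sup>+ \<omega>. ennreal (order_stat n k \<omega>) \<partial>(PiM {..<n} (\<lambda>_. F)))
         \<le> (\<integral>\<^sup>+ \<omega>. ennreal (order_stat n k \<omega>) \<partial>(PiM {..<n} (\<lambda>_. P))) + 1"
proof -
  have "\<alpha> > 0" "1 \<le> k" "k \<le> n"
    using assms(1,3) by auto
  have "(\<integral>\<^sup>+ \<omega>. ennreal (order_stat n k \<omega>) \<partial>(PiM {..<n} (\<lambda>_. F)))
      \<le> (\<integral>\<^sup>+ \<omega>. ennreal (order_stat n k \<omega>) \<partial>(PiM {..<n} (\<lambda>_. P)))"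
  proof (rule nn_integral_PiM_le_of_coupling)
    show "pareto_to_frechet \<alpha> \<in> borel_measurable borel"
      by (rule borel_measurable_mono[OF mono_pareto_to_frechet[OF \<open>\<alpha> > 0\<close>]])
    show "distr P borel (pareto_to_frechet \<alpha>) = F"
      using \<open>\<alpha> > 0\<close> assms(4-7) by (rule distr_pareto_to_frechet)
    show "pareto_to_frechet \<alpha> x \<le> x" for x
      using \<open>\<alpha> > 0\<close> by (rule pareto_to_frechet_le)
    show "(\<lambda>\<omega>. ennreal (order_stat n k \<omega>)) \<in> borel_measurable (PiM {..<n} (\<lambda>_. borel))"
      using order_stat_measurable[OF \<open>1 \<le> k\<close> \<open>k \<le> n\<close>] by measurable
    show "ennreal (order_stat n k \<omega>') \<le> ennreal (order_stat n k \<omega>)"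
      if "\<And>i. i \<in> {..<n} \<Longrightarrow> \<omega>' i \<le> \<omega> i" for \<omega> \<omega>'
      using that by (intro ennreal_leI order_stat_mono[OF \<open>1 \<le> k\<close> \<open>k \<le> n\<close>]) auto
  qed (use assms in auto)
  then show ?thesis
    by (simp add: add_increasing2)
qed

end
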